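(* Let $\alpha>0$ and $\lambda_1,\dots,\lambda_n,\lambda^*_1,\dots,\lambda^*_n>0$. Let $X_1,\dots,X_n$ be independent with $X_i\sim\mathrm{GE}(\alpha,\lambda_i)$ and $X^*_1,\dots,X^*_n$ independent with $X^*_i\sim\mathrm{GE}(\alpha,\lambda^*_i)$. (a) If $0<\alpha\le1$ and $\sum_{i=1}^{j}\lambda^*_{(i)}\ge\sum_{i=1}^{j}\lambda_{(i)}$ for all $j=1,\dots,n$, then $X_{1:n}\ge_{\rm st}X^*_{1:n}$. (b) If $\alpha\ge1$ and $\sum_{i=j}^{n}\lambda^*_{(i)}\le\sum_{i=j}^{n}\lambda_{(i)}$ for all $j=1,\dots,n$, then $X_{1:n}\le_{\rm st}X^*_{1:n}$.
   Context: $X\sim\mathrm{GE}(\alpha,\lambda)$ means $X$ has distribution function $(1-e^{-\lambda x})^{\alpha}$, $x>0$. $X_{1:n}=\min_i X_i$. $\lambda_{(1)}\le\dots\le\lambda_{(n)}$ are the components in increasing order. $X\le_{\rm st}Y$ means $P(X>x)\le P(Y>x)$ for all $x$. *)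

theory Defs
  imports "HOL-Probability.Probability"
begin

definition ge_cdf :: "real \<Rightarrow> real \<Rightarrow> real \<Rightarrow> real" where
  "ge_cdf \<alpha> l x = (if x > 0 then (1 - exp (- l * x)) powr \<alpha> else 0)"

definition has_GE :: "'a measure \<Rightarrow> ('a \<Rightarrow> real) \<Rightarrow> real \<Rightarrow> real \<Rightarrow> bool" where
  "has_GE M X \<alpha> l \<longleftrightarrow> X \<in> borel_measurable M \<and>
     (\<forall>x. measure M {\<omega> \<in> space M. X \<omega> \<le> x} = ge_cdf \<alpha> l x)"

definition st_le :: "'a measure \<Rightarrow> ('a \<Rightarrow> real) \<Rightarrow> 'b measure \<Rightarrow> ('b \<Rightarrow> real) \<Rightarrow> bool" where
  "st_le M X N Y \<longleftrightarrow>
     (\<forall>x. measure M {\<omega> \<in> space M. X \<omega> > x} \<le> measure N {\<omega> \<in> space N. Y \<omega> > x})"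

definition ord_stat :: "nat \<Rightarrow> (nat \<Rightarrow> real) \<Rightarrow> nat \<Rightarrow> real" where
  "ord_stat n lam i = sort (map lam [0..<n]) ! i"

definition min_rv :: "nat \<Rightarrow> (nat \<Rightarrow> 'a \<Rightarrow> real) \<Rightarrow> 'a \<Rightarrow> real" where
  "min_rv n X \<omega> = Min ((\<lambda>i. X i \<omega>) ` {..<n})"

end

theory Submission
  imports Defs
begin

text \<open>For \<open>x > 0\<close> the survival function of \<open>X\<^sub>1\<^sub>:\<^sub>n\<close> is \<open>exp (\<Sum>\<^sub>i \<phi> (x \<lambda>\<^sub>i))\<close> with
  \<open>\<phi> t = ln (1 - (1 - exp (- t)) powr \<alpha>)\<close>, and \<open>\<phi>'\<close> is minus the hazard rate of GE(\<alpha>, 1).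
  After the substitution \<open>u = 1 - exp (- t)\<close>, Bernoulli's inequality for real exponents shows that
  this hazard rate is decreasing for \<open>\<alpha> \<le> 1\<close> and increasing for \<open>\<alpha> \<ge> 1\<close>. So \<open>\<phi>\<close> is convex
  and decreasing in case (a), \<open>- \<phi>\<close> is convex and increasing in case (b), and the hypotheses are
  weak super- resp. submajorization of the rate vectors, under which the Tomic-Weyl inequality
  (tangent lines plus Abel summation) compares \<open>\<Sum>\<^sub>i \<phi> (x \<lambda>\<^sup>*\<^sub>i)\<close> with \<open>\<Sum>\<^sub>i \<phi> (x \<lambda>\<^sub>i)\<close>.\<close>

lemma sum_mult_le_of_prefix_sums_nonneg:
  fixes c D :: "nat \<Rightarrow> real"
  assumes c_mono: "\<And>i j. i \<le> j \<Longrightarrow> j < n \<Longrightarrow> c i \<le> c j"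
    and prefix_nonneg: "\<And>k. 1 \<le> k \<Longrightarrow> k \<le> n \<Longrightarrow> 0 \<le> (\<Sum>i<k. D i)"
    and "1 \<le> k" "k \<le> n"
  shows "(\<Sum>i<k. c i * D i) \<le> c (k - 1) * (\<Sum>i<k. D i)"
  using assms(3,4)
proof (induction k rule: nat_induct_at_least)
  case base
  then show ?case by simp
next
  case (Suc k)
  have "c (k - 1) * (\<Sum>i<k. D i) \<le> c k * (\<Sum>i<k. D i)"
    using Suc by (intro mult_right_mono c_mono prefix_nonneg) auto
  then show ?case using Suc by (simp add: algebra_simps)
qed

lemma sum_mult_le_of_suffix_sums_nonpos:
  fixes c D :: "nat \<Rightarrow> real"
  assumes c_mono: "\<And>i j. i \<le> j \<Longrightarrow> j < n \<Longrightarrow> c i \<le> c j"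
    and suffix_nonpos: "\<And>j. j < n \<Longrightarrow> (\<Sum>i\<in>{j..<n}. D i) \<le> 0"
    and "j < n"
  shows "(\<Sum>i\<in>{j..<n}. c i * D i) \<le> c j * (\<Sum>i\<in>{j..<n}. D i)"
proof -
  from \<open>j < n\<close> have "j \<le> n - 1" by simp
  then show ?thesis
  proof (induction j rule: inc_induct)
    case base
    have "{n - 1..<n} = {n - 1}" using \<open>j < n\<close> by auto
    then show ?case by simp
  next
    case (step m)
    have "c (Suc m) * (\<Sum>i\<in>{Suc m..<n}. D i) \<le> c m * (\<Sum>i\<in>{Suc m..<n}. D i)"
      using step by (intro mult_right_mono_neg c_mono suffix_nonpos) auto
    then show ?case using step by (simp add: sum.atLeast_Suc_lessThan algebra_simps)
  qed
qed

lemma sum_diff_le_sum_tangent: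
  fixes f f' :: "real \<Rightarrow> real" and a b :: "nat \<Rightarrow> real"
  assumes deriv: "\<And>x. x > 0 \<Longrightarrow> (f has_real_derivative f' x) (at x)"
    and f'_mono: "\<And>x y. 0 < x \<Longrightarrow> x \<le> y \<Longrightarrow> f' x \<le> f' y"
    and a_pos: "\<And>i. i < n \<Longrightarrow> a i > 0" and b_pos: "\<And>i. i < n \<Longrightarrow> b i > 0"
  shows "(\<Sum>i<n. f (a i)) - (\<Sum>i<n. f (b i)) \<le> (\<Sum>i<n. f' (a i) * (a i - b i))"
proof -
  have convex: "convex_on {0<..} f"
    by (rule convex_on_realI[OF connected_Ioi, where f' = f']) (use deriv f'_mono in auto)
  have "f (b i) - f (a i) \<ge> f' (a i) * (b i - a i)" if "i < n" for i
    using that a_pos b_pos deriv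
    by (intro convex_on_imp_above_tangent[OF convex connected_Ioi])
       (auto simp: interior_open intro: has_field_derivative_at_within)
  then have "(\<Sum>i<n. f (a i) - f (b i)) \<le> (\<Sum>i<n. f' (a i) * (a i - b i))"
    by (intro sum_mono) (simp add: algebra_simps)
  then show ?thesis by (simp add: sum_subtractf)
qed

lemma sum_convex_le_of_weak_supermajorization:
  fixes f f' :: "real \<Rightarrow> real" and a b :: "nat \<Rightarrow> real"
  assumes deriv: "\<And>x. x > 0 \<Longrightarrow> (f has_real_derivative f' x) (at x)"
    and f'_mono: "\<And>x y. 0 < x \<Longrightarrow> x \<le> y \<Longrightarrow> f' x \<le> f' y"
    and f'_nonpos: "\<And>x. x > 0 \<Longrightarrow> f' x \<le> 0"
    and a_pos: "\<And>i. i < n \<Longrightarrow> a i > 0" and b_pos: "\<And>i. i < n \<Longrightarrow> b i > 0"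
    and a_sorted: "\<And>i j. i \<le> j \<Longrightarrow> j < n \<Longrightarrow> a i \<le> a j"
    and prefix: "\<And>k. 1 \<le> k \<Longrightarrow> k \<le> n \<Longrightarrow> (\<Sum>i<k. b i) \<le> (\<Sum>i<k. a i)"
  shows "(\<Sum>i<n. f (a i)) \<le> (\<Sum>i<n. f (b i))"
proof (cases "n = 0")
  case False
  have "(\<Sum>i<n. f (a i)) - (\<Sum>i<n. f (b i)) \<le> (\<Sum>i<n. f' (a i) * (a i - b i))"
    by (rule sum_diff_le_sum_tangent[OF deriv f'_mono a_pos b_pos])
  also have "\<dots> \<le> f' (a (n - 1)) * (\<Sum>i<n. a i - b i)"
    using False a_pos prefix
    by (intro sum_mult_le_of_prefix_sums_nonneg f'_mono a_sorted) (auto simp: sum_subtractf)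
  also have "\<dots> \<le> 0"
    using False a_pos prefix[of n] f'_nonpos[of "a (n - 1)"]
    by (intro mult_nonpos_nonneg) (auto simp: sum_subtractf)
  finally show ?thesis by simp
qed simp

lemma sum_convex_le_of_weak_submajorization:
  fixes f f' :: "real \<Rightarrow> real" and a b :: "nat \<Rightarrow> real"
  assumes deriv: "\<And>x. x > 0 \<Longrightarrow> (f has_real_derivative f' x) (at x)"
    and f'_mono: "\<And>x y. 0 < x \<Longrightarrow> x \<le> y \<Longrightarrow> f' x \<le> f' y"
    and f'_nonneg: "\<And>x. x > 0 \<Longrightarrow> f' x \<ge> 0"
    and a_pos: "\<And>i. i < n \<Longrightarrow> a i > 0" and b_pos: "\<And>i. i < n \<Longrightarrow> b i > 0"
    and a_sorted: "\<And>i j. i \<le> j \<Longrightarrow> j < n \<Longrightarrow> a i \<le> a j"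
    and suffix: "\<And>j. j < n \<Longrightarrow> (\<Sum>i\<in>{j..<n}. a i) \<le> (\<Sum>i\<in>{j..<n}. b i)"
  shows "(\<Sum>i<n. f (a i)) \<le> (\<Sum>i<n. f (b i))"
proof (cases "n = 0")
  case False
  have "(\<Sum>i<n. f (a i)) - (\<Sum>i<n. f (b i)) \<le> (\<Sum>i\<in>{0..<n}. f' (a i) * (a i - b i))"
    using sum_diff_le_sum_tangent[OF deriv f'_mono a_pos b_pos] by (simp add: atLeast0LessThan)
  also have "\<dots> \<le> f' (a 0) * (\<Sum>i\<in>{0..<n}. a i - b i)"
    using False a_pos suffix
    by (intro sum_mult_le_of_suffix_sums_nonpos f'_mono a_sorted) (auto simp: sum_subtractf)
  also have "\<dots> \<le> 0"
    using False a_pos suffix[of 0] f'_nonneg[of "a 0"]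
    by (intro mult_nonneg_nonpos) (auto simp: sum_subtractf)
  finally show ?thesis by simp
qed simp

lemma powr_le_affine_of_le_one:
  fixes u a :: real
  assumes "u > 0" "0 \<le> a" "a \<le> 1"
  shows "u powr a \<le> a * u + (1 - a)"
  using Youngs_inequality_0[of a "1 - a" u 1] assms by simp

lemma affine_le_powr_of_ge_one:
  fixes u a :: real
  assumes "u > 0" "a \<ge> 1"
  shows "a * u + (1 - a) \<le> u powr a"
proof -
  have "(u powr a) powr (1 / a) \<le> (1 / a) * u powr a + (1 - 1 / a)"
    using Youngs_inequality_0[of "1 / a" "1 - 1 / a" "u powr a" 1] assms by simp
  moreover have "(u powr a) powr (1 / a) = u" using assms by (simp add: powr_powr)
  ultimately have "a * u \<le> a * ((1 / a) * u powr a + (1 - 1 / a))"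
    using assms by simp
  also have "\<dots> = u powr a + a - 1" using assms by (simp add: field_simps)
  finally show ?thesis by simp
qed

definition ge_log_surv :: "real \<Rightarrow> real \<Rightarrow> real" where
  "ge_log_surv a t = ln (1 - (1 - exp (- t)) powr a)"

definition ge_hazard :: "real \<Rightarrow> real \<Rightarrow> real" where
  "ge_hazard a t = a * (1 - exp (- t)) powr (a - 1) * exp (- t) / (1 - (1 - exp (- t)) powr a)"

text \<open>\<open>a\<close> times the Mills ratio (reciprocal hazard rate) of GE(a, 1), in the variable
  \<open>u = 1 - exp (- t)\<close>.\<close>
definition ge_scaled_mills :: "real \<Rightarrow> real \<Rightarrow> real" where
  "ge_scaled_mills a u = (u powr (1 - a) - u) / (1 - u)"

lemma one_minus_ge_cdf_eq_exp:
  assumes "x > 0" "l > 0" "a > 0"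
  shows "1 - ge_cdf a l x = exp (ge_log_surv a (x * l))"
  using assms powr01_less_one[of "1 - exp (- (x * l))" a]
  by (simp add: ge_cdf_def ge_log_surv_def mult.commute)

lemma has_real_derivative_ge_log_surv:
  assumes "t > 0" "a > 0"
  shows "(ge_log_surv a has_real_derivative - ge_hazard a t) (at t)"
proof -
  have bounds: "0 < 1 - exp (- t)" "(1 - exp (- t)) powr a < 1"
    using assms powr01_less_one[of "1 - exp (- t)" a] by auto
  show ?thesis unfolding ge_log_surv_def ge_hazard_def
    by (rule derivative_eq_intros refl | use bounds in simp)+
qed

lemma ge_hazard_nonneg:
  assumes "t > 0" "a > 0"
  shows "ge_hazard a t \<ge> 0"
  using assms powr01_less_one[of "1 - exp (- t)" a] by (simp add: ge_hazard_def)

lemma ge_scaled_mills_pos: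
  assumes "0 < u" "u < 1" "a > 0"
  shows "ge_scaled_mills a u > 0"
proof -
  have "u powr a < 1" using assms powr01_less_one by blast
  then have "u < u powr (1 - a)" using assms by (simp add: powr_diff less_divide_eq)
  then show ?thesis using assms by (simp add: ge_scaled_mills_def)
qed

lemma ge_hazard_eq_scaled_mills:
  assumes "t > 0" "a > 0"
  shows "ge_hazard a t = a / ge_scaled_mills a (1 - exp (- t))"
proof -
  define u where "u = 1 - exp (- t)"
  have u: "0 < u" "u < 1" using assms by (auto simp: u_def)
  have "u powr a < 1" using u assms powr01_less_one by blast
  then have nz: "u \<noteq> 0" "1 - u \<noteq> 0" "1 - u powr a \<noteq> 0" "u powr a \<noteq> 0" using u by auto
  have "ge_hazard a t = a * (u powr a / u) * (1 - u) / (1 - u powr a)"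
    unfolding ge_hazard_def u_def[symmetric] using u by (simp add: u_def powr_diff)
  also have "\<dots> = a / ((u / u powr a - u) / (1 - u))"
    using nz by (simp add: field_simps)
  also have "\<dots> = a / ge_scaled_mills a u"
    using u by (simp add: ge_scaled_mills_def powr_diff)
  finally show ?thesis by (simp add: u_def)
qed

lemma has_real_derivative_ge_scaled_mills:
  assumes "0 < u" "u < 1"
  shows "(ge_scaled_mills a has_real_derivative
           ((1 - a) + a * u - u powr a) / (u powr a * (1 - u)\<^sup>2)) (at u)"
proof -
  have "((\<lambda>u. u powr (1 - a)) has_real_derivative (1 - a) * u powr (- a)) (at u)"
    using DERIV_fun_powr[OF DERIV_ident, of u "1 - a"] assms by simp
  from DERIV_divide[OF DERIV_diff[OF this DERIV_ident] DERIV_diff[OF DERIV_const[of 1] DERIV_ident]]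
  have "(ge_scaled_mills a has_real_derivative
          (((1 - a) * u powr (- a) - 1) * (1 - u) - (u - u powr (1 - a))) / ((1 - u) * (1 - u))) (at u)"
    using assms unfolding ge_scaled_mills_def by simp
  moreover have "u powr (- a) = 1 / u powr a" "u powr (1 - a) = u / u powr a" "u powr a > 0"
    using assms by (simp_all add: powr_minus divide_inverse powr_diff)
  ultimately show ?thesis
    by (simp add: field_simps power2_eq_square)
qed

lemma ge_scaled_mills_mono:
  assumes "0 \<le> a" "a \<le> 1" "0 < u" "u \<le> v" "v < 1"
  shows "ge_scaled_mills a u \<le> ge_scaled_mills a v"
proof (rule DERIV_nonneg_imp_nondecreasing[OF \<open>u \<le> v\<close>])
  fix w assume "u \<le> w" "w \<le> v"
  with assms have "0 < w" "w < 1" by auto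
  then have "(1 - a) + a * w - w powr a \<ge> 0"
    using powr_le_affine_of_le_one[of w a] assms by simp
  with \<open>0 < w\<close> \<open>w < 1\<close> show "\<exists>y. DERIV (ge_scaled_mills a) w :> y \<and> y \<ge> 0"
    using has_real_derivative_ge_scaled_mills[of w a] by (auto intro!: divide_nonneg_pos)
qed

lemma ge_scaled_mills_antimono:
  assumes "1 \<le> a" "0 < u" "u \<le> v" "v < 1"
  shows "ge_scaled_mills a v \<le> ge_scaled_mills a u"
proof (rule DERIV_nonpos_imp_nonincreasing[OF \<open>u \<le> v\<close>])
  fix w assume "u \<le> w" "w \<le> v"
  with assms have "0 < w" "w < 1" by auto
  then have "(1 - a) + a * w - w powr a \<le> 0"
    using affine_le_powr_of_ge_one[of w a] assms by simp
  with \<open>0 < w\<close> \<open>w < 1\<close> show "\<exists>y. DERIV (ge_scaled_mills a) w :> y \<and> y \<le> 0"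
    using has_real_derivative_ge_scaled_mills[of w a] by (auto intro!: divide_nonpos_pos)
qed

lemma ge_hazard_antimono:
  assumes "0 < a" "a \<le> 1" "0 < s" "s \<le> t"
  shows "ge_hazard a t \<le> ge_hazard a s"
proof -
  have "0 < 1 - exp (- s)" "1 - exp (- s) \<le> 1 - exp (- t)" "1 - exp (- t) < 1"
    using assms by auto
  then show ?thesis
    using assms ge_scaled_mills_mono ge_scaled_mills_pos
    by (simp add: ge_hazard_eq_scaled_mills divide_left_mono)
qed

lemma ge_hazard_mono:
  assumes "1 \<le> a" "0 < s" "s \<le> t"
  shows "ge_hazard a s \<le> ge_hazard a t"
proof -
  have "0 < 1 - exp (- s)" "1 - exp (- s) \<le> 1 - exp (- t)" "1 - exp (- t) < 1"
    using assms by auto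
  then show ?thesis
    using assms ge_scaled_mills_antimono ge_scaled_mills_pos
    by (simp add: ge_hazard_eq_scaled_mills divide_left_mono)
qed

lemma sum_ge_log_surv_le_of_weak_supermajorization:
  fixes p q :: "nat \<Rightarrow> real"
  assumes "0 < \<alpha>" "\<alpha> \<le> 1" "x > 0"
    and "\<And>i. i < n \<Longrightarrow> p i > 0" and "\<And>i. i < n \<Longrightarrow> q i > 0"
    and "\<And>i j. i \<le> j \<Longrightarrow> j < n \<Longrightarrow> p i \<le> p j"
    and prefix: "\<And>k. 1 \<le> k \<Longrightarrow> k \<le> n \<Longrightarrow> (\<Sum>i<k. q i) \<le> (\<Sum>i<k. p i)"
  shows "(\<Sum>i<n. ge_log_surv \<alpha> (x * p i)) \<le> (\<Sum>i<n. ge_log_surv \<alpha> (x * q i))"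
proof (rule sum_convex_le_of_weak_supermajorization
         [where f' = "\<lambda>t. - ge_hazard \<alpha> t" and a = "\<lambda>i. x * p i" and b = "\<lambda>i. x * q i"])
  show "(\<Sum>i<k. x * q i) \<le> (\<Sum>i<k. x * p i)" if "1 \<le> k" "k \<le> n" for k
    using prefix[OF that] \<open>x > 0\<close> by (simp add: sum_distrib_left[symmetric])
qed (use assms has_real_derivative_ge_log_surv ge_hazard_antimono ge_hazard_nonneg in auto)

lemma sum_ge_log_surv_le_of_weak_submajorization:
  fixes p q :: "nat \<Rightarrow> real"
  assumes "1 \<le> \<alpha>" "x > 0"
    and "\<And>i. i < n \<Longrightarrow> p i > 0" and "\<And>i. i < n \<Longrightarrow> q i > 0"
    and "\<And>i j. i \<le> j \<Longrightarrow> j < n \<Longrightarrow> p i \<le> p j"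
    and suffix: "\<And>j. j < n \<Longrightarrow> (\<Sum>i\<in>{j..<n}. p i) \<le> (\<Sum>i\<in>{j..<n}. q i)"
  shows "(\<Sum>i<n. ge_log_surv \<alpha> (x * q i)) \<le> (\<Sum>i<n. ge_log_surv \<alpha> (x * p i))"
proof -
  have deriv: "((\<lambda>t. - ge_log_surv \<alpha> t) has_real_derivative ge_hazard \<alpha> t) (at t)" if "t > 0" for t
    using DERIV_minus[OF has_real_derivative_ge_log_surv[OF that]] \<open>1 \<le> \<alpha>\<close> by simp
  have "(\<Sum>i<n. - ge_log_surv \<alpha> (x * p i)) \<le> (\<Sum>i<n. - ge_log_surv \<alpha> (x * q i))"
  proof (rule sum_convex_le_of_weak_submajorization
           [where f' = "ge_hazard \<alpha>" and a = "\<lambda>i. x * p i" and b = "\<lambda>i. x * q i"])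
    show "(\<Sum>i\<in>{j..<n}. x * p i) \<le> (\<Sum>i\<in>{j..<n}. x * q i)" if "j < n" for j
      using suffix[OF that] \<open>x > 0\<close> by (simp add: sum_distrib_left[symmetric])
  qed (use assms deriv ge_hazard_mono ge_hazard_nonneg in auto)
  then show ?thesis by (simp add: sum_negf)
qed

lemma sum_ord_stat: "(\<Sum>i<n. g (ord_stat n l i)) = (\<Sum>i<n. g (l i) :: real)"
proof -
  have "(\<Sum>i<n. g (ord_stat n l i)) = sum_list (map g (sort (map l [0..<n])))"
    by (simp add: ord_stat_def sum_list_sum_nth atLeast0LessThan)
  also have "\<dots> = sum_list (map g (map l [0..<n]))"
    by (metis mset_map mset_sort sum_mset_sum_list)
  also have "\<dots> = (\<Sum>i<n. g (l i))"
    by (simp add: sum_list_sum_nth atLeast0LessThan)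
  finally show ?thesis .
qed

lemma ord_stat_mono: "i \<le> j \<Longrightarrow> j < n \<Longrightarrow> ord_stat n l i \<le> ord_stat n l j"
  unfolding ord_stat_def by (rule sorted_nth_mono) auto

lemma ord_stat_pos:
  assumes "\<forall>i<n. l i > 0" "i < n"
  shows "ord_stat n l i > 0"
proof -
  have "ord_stat n l i \<in> set (sort (map l [0..<n]))"
    unfolding ord_stat_def using assms(2) by (intro nth_mem) simp
  then show ?thesis using assms(1) by auto
qed

lemma (in prob_space) prob_min_rv_greater:
  assumes "n \<ge> 1" "indep_vars (\<lambda>_. borel) X {..<n}"
  shows "prob {\<omega> \<in> space M. min_rv n X \<omega> > x}
           = (\<Prod>i<n. 1 - prob {\<omega> \<in> space M. X i \<omega> \<le> x})"
proof -
  have "{..<n} \<noteq> {}" using assms(1) by (simp add: lessThan_empty_iff)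
  then have "{\<omega> \<in> space M. min_rv n X \<omega> > x} = (\<Inter>i\<in>{..<n}. X i -` {x<..} \<inter> space M)"
    by (auto simp: min_rv_def)
  also have "prob \<dots> = (\<Prod>i<n. prob (X i -` {x<..} \<inter> space M))"
    using \<open>{..<n} \<noteq> {}\<close> by (intro indep_varsD[OF assms(2)]) auto
  also have "\<dots> = (\<Prod>i<n. 1 - prob {\<omega> \<in> space M. X i \<omega> \<le> x})"
  proof (rule prod.cong[OF refl])
    fix i assume "i \<in> {..<n}"
    then have "X i \<in> borel_measurable M"
      using assms(2) by (auto simp: indep_vars_def)
    then have "{\<omega> \<in> space M. X i \<omega> \<le> x} \<in> events" by measurable
    moreover have "X i -` {x<..} \<inter> space M = space M - {\<omega> \<in> space M. X i \<omega> \<le> x}" by auto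
    ultimately show "prob (X i -` {x<..} \<inter> space M) = 1 - prob {\<omega> \<in> space M. X i \<omega> \<le> x}"
      by (simp add: prob_compl)
  qed
  finally show ?thesis .
qed

lemma (in prob_space) prob_min_rv_GE_greater:
  assumes "n \<ge> 1" "\<alpha> > 0" "\<forall>i<n. lam i > 0"
    and "indep_vars (\<lambda>_. borel) X {..<n}" "\<forall>i<n. has_GE M (X i) \<alpha> (lam i)"
  shows "prob {\<omega> \<in> space M. min_rv n X \<omega> > x}
           = (if x > 0 then exp (\<Sum>i<n. ge_log_surv \<alpha> (x * ord_stat n lam i)) else 1)"
proof -
  have "prob {\<omega> \<in> space M. min_rv n X \<omega> > x} = (\<Prod>i<n. 1 - ge_cdf \<alpha> (lam i) x)"
    using assms by (simp add: prob_min_rv_greater has_GE_def)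
  also have "\<dots> = (if x > 0 then (\<Prod>i<n. exp (ge_log_surv \<alpha> (x * lam i))) else 1)"
    using assms by (simp add: ge_cdf_def one_minus_ge_cdf_eq_exp[symmetric])
  also have "\<dots> = (if x > 0 then exp (\<Sum>i<n. ge_log_surv \<alpha> (x * ord_stat n lam i)) else 1)"
    by (simp add: exp_sum sum_ord_stat[where g = "\<lambda>v. ge_log_surv \<alpha> (x * v)"])
  finally show ?thesis .
qed

lemma st_le_min_rv_GE_of_sum_ge_log_surv_le:
  assumes "prob_space M" "prob_space N" "n \<ge> 1" "\<alpha> > 0"
    and "\<forall>i<n. lam i > 0" "\<forall>i<n. lams i > 0"
    and "prob_space.indep_vars M (\<lambda>_. borel) X {..<n}"
    and "prob_space.indep_vars N (\<lambda>_. borel) Xs {..<n}"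
    and "\<forall>i<n. has_GE M (X i) \<alpha> (lam i)" "\<forall>i<n. has_GE N (Xs i) \<alpha> (lams i)"
    and "\<And>x. x > 0 \<Longrightarrow>
      (\<Sum>i<n. ge_log_surv \<alpha> (x * ord_stat n lam i)) \<le> (\<Sum>i<n. ge_log_surv \<alpha> (x * ord_stat n lams i))"
  shows "st_le M (min_rv n X) N (min_rv n Xs)"
  using assms prob_space.prob_min_rv_GE_greater[of M n \<alpha> lam X]
    prob_space.prob_min_rv_GE_greater[of N n \<alpha> lams Xs]
  by (auto simp: st_le_def)

theorem mainTheorem12:
  fixes M :: "'a measure" and N :: "'b measure"
    and X :: "nat \<Rightarrow> 'a \<Rightarrow> real" and Xs :: "nat \<Rightarrow> 'b \<Rightarrow> real"
    and lam lams :: "nat \<Rightarrow> real" and \<alpha> :: real and n :: nat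
  assumes "prob_space M" and "prob_space N"
    and "n \<ge> 1" and "\<alpha> > 0"
    and "\<forall>i<n. lam i > 0" and "\<forall>i<n. lams i > 0"
    and "prob_space.indep_vars M (\<lambda>_. borel) X {..<n}"
    and "prob_space.indep_vars N (\<lambda>_. borel) Xs {..<n}"
    and "\<forall>i<n. has_GE M (X i) \<alpha> (lam i)"
    and "\<forall>i<n. has_GE N (Xs i) \<alpha> (lams i)"
  shows "(\<alpha> \<le> 1 \<and> (\<forall>j\<in>{1..n}. (\<Sum>i<j. ord_stat n lams i) \<ge> (\<Sum>i<j. ord_stat n lam i))
            \<longrightarrow> st_le N (min_rv n Xs) M (min_rv n X))
       \<and> (\<alpha> \<ge> 1 \<and> (\<forall>j<n. (\<Sum>i\<in>{j..<n}. ord_stat n lams i) \<le> (\<Sum>i\<in>{j..<n}. ord_stat n lam i))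
            \<longrightarrow> st_le M (min_rv n X) N (min_rv n Xs))"
proof (intro conjI impI)
  assume "\<alpha> \<le> 1 \<and> (\<forall>j\<in>{1..n}. (\<Sum>i<j. ord_stat n lams i) \<ge> (\<Sum>i<j. ord_stat n lam i))"
  then show "st_le N (min_rv n Xs) M (min_rv n X)"
    using assms ord_stat_pos[of n lam] ord_stat_pos[of n lams] ord_stat_mono[of _ _ n lams]
    by (intro st_le_min_rv_GE_of_sum_ge_log_surv_le[OF assms(2,1,3,4,6,5,8,7,10,9)]
          sum_ge_log_surv_le_of_weak_supermajorization) auto
next
  assume "\<alpha> \<ge> 1 \<and> (\<forall>j<n. (\<Sum>i\<in>{j..<n}. ord_stat n lams i) \<le> (\<Sum>i\<in>{j..<n}. ord_stat n lam i))"
  then show "st_le M (min_rv n X) N (min_rv n Xs)"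
    using assms ord_stat_pos[of n lam] ord_stat_pos[of n lams] ord_stat_mono[of _ _ n lams]
    by (intro st_le_min_rv_GE_of_sum_ge_log_surv_le[OF assms(1-10)]
          sum_ge_log_surv_le_of_weak_submajorization) auto
qed

end
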